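(* Let $q$ be a self-join-free Boolean conjunctive query. Let $C=F_0\to F_1\to\cdots\to F_{k-1}\to F_0$ be an elementary cycle of length $k\ge 2$ in the M-graph of $q$, and identify $C$ with the set $\{F_0,\dots,F_{k-1}\}$. Let $\mathbf{db}$ be a database. Let $\mathbf{o}$ be a minimal (with respect to $\subseteq$) subset of $\mathbf{db}$ satisfying: (1) $\mathbf{o}$ contains every fact $A$ of $\mathbf{db}$ with $\mathrm{atom}(A)\in\{F_0,\dots,F_{k-1}\}$ that has outdegree zero in the $\hookrightarrow_C$-graph; (2) $\mathbf{o}$ contains every fact belonging to some irrelevant $1$-embedding of $C$ in $\mathbf{db}$; (3) $\mathbf{o}$ contains every fact belonging to some $n$-embedding of $C$ in $\mathbf{db}$ with $n\ge 2$; (4) if $\mathbf{o}$ contains some fact of a relevant $1$-embedding of $C$ in $\mathbf{db}$, then $\mathbf{o}$ contains every fact of that $1$-embedding; and (5) if $\mathbf{o}$ contains a fact $A$, then $\mathbf{o}$ includes the block of $A$ in $\mathbf{db}$. Then $\mathbf{o}$ is the maximal garbage set for $C$ in $\mathbf{db}$.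
   Context: Every relation name has a signature $[n,k]$ ($1\le k\le n$; primary-key positions $1,\dots,k$) and a mode in $\{\mathsf{c},\mathsf{i}\}$. For an atom $F$, $\mathrm{key}(F)$ = variables at primary-key positions, $\mathrm{vars}(F)$ = all its variables. Facts are variable-free atoms; key-equal facts share relation name and primary-key values. A database is a finite set of facts with no two distinct key-equal facts of mode $\mathsf{c}$, all of whose relation names occur in $q$; the block of $A$ in $\mathbf{db}$ is the set of facts of $\mathbf{db}$ key-equal to $A$; a repair is a maximal subset without two distinct key-equal facts. A self-join-free Boolean conjunctive query is a finite set of atoms with distinct relation names; $\mathrm{atom}(A)$ is the atom of $q$ with the relation name of fact $A$. $\mathcal{K}(p)=\{\mathrm{key}(F)\to\mathrm{vars}(F)\mid F\in p\}$; $q^{\mathsf{c}}$ = atoms of $q$ of mode $\mathsf{c}$. M-graph of $q$: vertices atoms of $q$, edge $F\to G$ ($F\ne G$) iff $\mathcal{K}(q^{\mathsf{c}})\models\mathrm{vars}(F)\to\mathrm{key}(G)$. $\hookrightarrow$-graph: vertices facts of $\mathbf{db}$, edge $A\hookrightarrow B$ iff there are a valuation $\theta$ of the variables of $q$ and an M-graph edge $F\to G$ with $\theta(q)\subseteq\mathbf{db}$, $A=\theta(F)$, $B$ key-equal to $\theta(G)$. The $\hookrightarrow_C$-graph: vertices the facts $A\in\mathbf{db}$ with $\mathrm{atom}(A)$ in $C$, edge $A\hookrightarrow_C B$ iff $A\hookrightarrow B$ and $C$ has an edge from $\mathrm{atom}(A)$ to $\mathrm{atom}(B)$. An $n$-embedding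 of $C$ in $\mathbf{db}$ is an elementary $\hookrightarrow_C$-cycle of length $nk$ containing no two distinct key-equal facts. A $1$-embedding is relevant if some valuation $\theta$ with $\theta(q)\subseteq\mathbf{db}$ has all facts of the $1$-embedding in $\theta(q)$; otherwise irrelevant. A subset $\mathbf{o}\subseteq\mathbf{db}$ is a garbage set for $q_0\subseteq q$ in $\mathbf{db}$ if (1) for every $A\in\mathbf{o}$, $\mathrm{atom}(A)\in q_0$ and the block of $A$ is included in $\mathbf{o}$; and (2) there is a repair $\mathbf{r}$ of $\mathbf{o}$ such that for every valuation $\theta$ of the variables of $q$, if $\theta(q)\subseteq(\mathbf{db}\setminus\mathbf{o})\cup\mathbf{r}$ then $\theta(q_0)\cap\mathbf{r}=\emptyset$. Garbage sets are closed under union; the maximal garbage set is the largest one. *)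

theory Defs
  imports Main
begin

datatype mode = ModeC | ModeI

record 'r schema =
  arity  :: "'r \<Rightarrow> nat"
  keylen :: "'r \<Rightarrow> nat"
  rmode  :: "'r \<Rightarrow> mode"

datatype ('v, 'c) trm = Var 'v | Cst 'c

datatype ('r, 'v, 'c) atom = Atom (arel: 'r) (aargs: "('v, 'c) trm list")

datatype ('r, 'c) fact = Fact (frel: 'r) (fargs: "'c list")

text \<open>key(F): variables at primary-key positions 1..k (list positions 0..<k).\<close>
definition key_vars :: "'r schema \<Rightarrow> ('r, 'v, 'c) atom \<Rightarrow> 'v set" where
  "key_vars S F = {v. \<exists>i < keylen S (arel F). i < length (aargs F) \<and> aargs F ! i = Var v}"

definition atom_vars :: "('r, 'v, 'c) atom \<Rightarrow> 'v set" where
  "atom_vars F = {v. Var v \<in> set (aargs F)}"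

definition sjf_query :: "'r schema \<Rightarrow> ('r, 'v, 'c) atom set \<Rightarrow> bool" where
  "sjf_query S q \<longleftrightarrow> finite q \<and> inj_on arel q \<and>
     (\<forall>F\<in>q. length (aargs F) = arity S (arel F) \<and>
             1 \<le> keylen S (arel F) \<and> keylen S (arel F) \<le> arity S (arel F))"

definition key_equal :: "'r schema \<Rightarrow> ('r, 'c) fact \<Rightarrow> ('r, 'c) fact \<Rightarrow> bool" where
  "key_equal S A B \<longleftrightarrow> frel A = frel B \<and>
     take (keylen S (frel A)) (fargs A) = take (keylen S (frel B)) (fargs B)"

definition is_db :: "'r schema \<Rightarrow> ('r, 'v, 'c) atom set \<Rightarrow> ('r, 'c) fact set \<Rightarrow> bool" where
  "is_db S q db \<longleftrightarrow> finite db \<and>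
     (\<forall>A\<in>db. frel A \<in> arel ` q \<and> length (fargs A) = arity S (frel A)) \<and>
     (\<forall>A\<in>db. \<forall>B\<in>db. rmode S (frel A) = ModeC \<and> key_equal S A B \<longrightarrow> A = B)"

definition block :: "'r schema \<Rightarrow> ('r, 'c) fact set \<Rightarrow> ('r, 'c) fact \<Rightarrow> ('r, 'c) fact set" where
  "block S db A = {B \<in> db. key_equal S A B}"

definition consistent :: "'r schema \<Rightarrow> ('r, 'c) fact set \<Rightarrow> bool" where
  "consistent S r \<longleftrightarrow> (\<forall>A\<in>r. \<forall>B\<in>r. key_equal S A B \<longrightarrow> A = B)"

definition is_repair :: "'r schema \<Rightarrow> ('r, 'c) fact set \<Rightarrow> ('r, 'c) fact set \<Rightarrow> bool" where
  "is_repair S ob r \<longleftrightarrow> r \<subseteq> ob \<and> consistent S r \<and>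
     (\<forall>r'. r \<subset> r' \<and> r' \<subseteq> ob \<longrightarrow> \<not> consistent S r')"

definition trm_val :: "('v \<Rightarrow> 'c) \<Rightarrow> ('v, 'c) trm \<Rightarrow> 'c" where
  "trm_val \<theta> t = (case t of Var v \<Rightarrow> \<theta> v | Cst c \<Rightarrow> c)"

definition inst :: "('v \<Rightarrow> 'c) \<Rightarrow> ('r, 'v, 'c) atom \<Rightarrow> ('r, 'c) fact" where
  "inst \<theta> F = Fact (arel F) (map (trm_val \<theta>) (aargs F))"

definition atom_of :: "('r, 'v, 'c) atom set \<Rightarrow> ('r, 'c) fact \<Rightarrow> ('r, 'v, 'c) atom" where
  "atom_of q A = (THE F. F \<in> q \<and> arel F = frel A)"

text \<open>Satisfaction and (semantic) logical implication of functional dependencies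
  over the variables, with tuples valued in an infinite domain (nat).\<close>
definition fd_sat :: "('v \<Rightarrow> nat) set \<Rightarrow> 'v set \<times> 'v set \<Rightarrow> bool" where
  "fd_sat R d \<longleftrightarrow> (\<forall>t\<in>R. \<forall>u\<in>R. (\<forall>v\<in>fst d. t v = u v) \<longrightarrow> (\<forall>v\<in>snd d. t v = u v))"

definition fd_implies :: "('v set \<times> 'v set) set \<Rightarrow> 'v set \<Rightarrow> 'v set \<Rightarrow> bool" where
  "fd_implies \<Sigma> X Y \<longleftrightarrow> (\<forall>R :: ('v \<Rightarrow> nat) set. (\<forall>d\<in>\<Sigma>. fd_sat R d) \<longrightarrow> fd_sat R (X, Y))"

definition Kfds :: "'r schema \<Rightarrow> ('r, 'v, 'c) atom set \<Rightarrow> ('v set \<times> 'v set) set" where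
  "Kfds S p = {(key_vars S F, atom_vars F) | F. F \<in> p}"

definition qc :: "'r schema \<Rightarrow> ('r, 'v, 'c) atom set \<Rightarrow> ('r, 'v, 'c) atom set" where
  "qc S q = {F \<in> q. rmode S (arel F) = ModeC}"

definition mgraph_edge :: "'r schema \<Rightarrow> ('r, 'v, 'c) atom set \<Rightarrow>
    ('r, 'v, 'c) atom \<Rightarrow> ('r, 'v, 'c) atom \<Rightarrow> bool" where
  "mgraph_edge S q F G \<longleftrightarrow> F \<in> q \<and> G \<in> q \<and> F \<noteq> G \<and>
     fd_implies (Kfds S (qc S q)) (atom_vars F) (key_vars S G)"

text \<open>Elementary cycle F_0 -> ... -> F_{k-1} -> F_0 of length k >= 2 in the M-graph,
  given as the list [F_0, ..., F_{k-1}].\<close>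
definition mgraph_cycle :: "'r schema \<Rightarrow> ('r, 'v, 'c) atom set \<Rightarrow> ('r, 'v, 'c) atom list \<Rightarrow> bool" where
  "mgraph_cycle S q Fs \<longleftrightarrow> 2 \<le> length Fs \<and> distinct Fs \<and>
     (\<forall>i < length Fs. mgraph_edge S q (Fs ! i) (Fs ! ((i + 1) mod length Fs)))"

definition cyc_edge :: "'a list \<Rightarrow> 'a \<Rightarrow> 'a \<Rightarrow> bool" where
  "cyc_edge Fs F G \<longleftrightarrow> (\<exists>i < length Fs. Fs ! i = F \<and> Fs ! ((i + 1) mod length Fs) = G)"

definition hook :: "'r schema \<Rightarrow> ('r, 'v, 'c) atom set \<Rightarrow> ('r, 'c) fact set \<Rightarrow>
    ('r, 'c) fact \<Rightarrow> ('r, 'c) fact \<Rightarrow> bool" where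
  "hook S q db A B \<longleftrightarrow> A \<in> db \<and> B \<in> db \<and>
     (\<exists>(\<theta> :: 'v \<Rightarrow> 'c) F G. mgraph_edge S q F G \<and> inst \<theta> ` q \<subseteq> db \<and>
        A = inst \<theta> F \<and> key_equal S B (inst \<theta> G))"

definition hookC :: "'r schema \<Rightarrow> ('r, 'v, 'c) atom set \<Rightarrow> ('r, 'c) fact set \<Rightarrow>
    ('r, 'v, 'c) atom list \<Rightarrow> ('r, 'c) fact \<Rightarrow> ('r, 'c) fact \<Rightarrow> bool" where
  "hookC S q db Fs A B \<longleftrightarrow> atom_of q A \<in> set Fs \<and> atom_of q B \<in> set Fs \<and>
     hook S q db A B \<and> cyc_edge Fs (atom_of q A) (atom_of q B)"

definition outdeg_zero :: "'r schema \<Rightarrow> ('r, 'v, 'c) atom set \<Rightarrow> ('r, 'c) fact set \<Rightarrow>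
    ('r, 'v, 'c) atom list \<Rightarrow> ('r, 'c) fact \<Rightarrow> bool" where
  "outdeg_zero S q db Fs A \<longleftrightarrow> A \<in> db \<and> atom_of q A \<in> set Fs \<and> \<not> (\<exists>B. hookC S q db Fs A B)"

definition embedding :: "'r schema \<Rightarrow> ('r, 'v, 'c) atom set \<Rightarrow> ('r, 'c) fact set \<Rightarrow>
    ('r, 'v, 'c) atom list \<Rightarrow> nat \<Rightarrow> ('r, 'c) fact list \<Rightarrow> bool" where
  "embedding S q db Fs n cs \<longleftrightarrow> 1 \<le> n \<and> length cs = n * length Fs \<and> distinct cs \<and>
     (\<forall>i < length cs. hookC S q db Fs (cs ! i) (cs ! ((i + 1) mod length cs))) \<and>
     consistent S (set cs)"

definition relevant :: "('r, 'v, 'c) atom set \<Rightarrow> ('r, 'c) fact set \<Rightarrow> ('r, 'c) fact list \<Rightarrow> bool" where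
  "relevant q db cs \<longleftrightarrow> (\<exists>\<theta> :: 'v \<Rightarrow> 'c. inst \<theta> ` q \<subseteq> db \<and> set cs \<subseteq> inst \<theta> ` q)"

definition garbage_set :: "'r schema \<Rightarrow> ('r, 'v, 'c) atom set \<Rightarrow> ('r, 'c) fact set \<Rightarrow>
    ('r, 'v, 'c) atom set \<Rightarrow> ('r, 'c) fact set \<Rightarrow> bool" where
  "garbage_set S q db q0 ob \<longleftrightarrow> ob \<subseteq> db \<and>
     (\<forall>A\<in>ob. atom_of q A \<in> q0 \<and> block S db A \<subseteq> ob) \<and>
     (\<exists>r. is_repair S ob r \<and>
        (\<forall>\<theta> :: 'v \<Rightarrow> 'c. inst \<theta> ` q \<subseteq> (db - ob) \<union> r \<longrightarrow> inst \<theta> ` q0 \<inter> r = {}))"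

definition max_garbage_set :: "'r schema \<Rightarrow> ('r, 'v, 'c) atom set \<Rightarrow> ('r, 'c) fact set \<Rightarrow>
    ('r, 'v, 'c) atom set \<Rightarrow> ('r, 'c) fact set \<Rightarrow> bool" where
  "max_garbage_set S q db q0 ob \<longleftrightarrow> garbage_set S q db q0 ob \<and>
     (\<forall>ob'. garbage_set S q db q0 ob' \<longrightarrow> ob' \<subseteq> ob)"

definition lemma19_conds :: "'r schema \<Rightarrow> ('r, 'v, 'c) atom set \<Rightarrow> ('r, 'c) fact set \<Rightarrow>
    ('r, 'v, 'c) atom list \<Rightarrow> ('r, 'c) fact set \<Rightarrow> bool" where
  "lemma19_conds S q db Fs ob \<longleftrightarrow> ob \<subseteq> db \<and>
     (\<forall>A. outdeg_zero S q db Fs A \<longrightarrow> A \<in> ob) \<and>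
     (\<forall>cs. embedding S q db Fs 1 cs \<and> \<not> relevant q db cs \<longrightarrow> set cs \<subseteq> ob) \<and>
     (\<forall>n cs. 2 \<le> n \<and> embedding S q db Fs n cs \<longrightarrow> set cs \<subseteq> ob) \<and>
     (\<forall>cs. embedding S q db Fs 1 cs \<and> relevant q db cs \<and> set cs \<inter> ob \<noteq> {} \<longrightarrow> set cs \<subseteq> ob) \<and>
     (\<forall>A\<in>ob. block S db A \<subseteq> ob)"

end

theory Submission
  imports Defs
begin

text \<open>Everything rests on the uniqueness, up to key-equality, of the successor of a fact in the
  C-graph: two valuations agreeing on an atom F agree on the key of the next atom G, because
  vars(F) -> key(G) follows from the key dependencies of the mode-c atoms, which every database
  satisfies.

  That ob is a garbage set: grow pairs (P, r) where P is a block-closed part of ob and r is a repair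
  of P containing the C-facts of no valuation. While one of the conditions (1)-(5) fails for P,
  the offending facts can be added; so the maximal P satisfies (1)-(5), equals ob by minimality,
  and its r witnesses the garbage property.

  That ob is maximal: if a garbage set ob' with repair r' left ob, pick one fact in every block of
  db - ob from which the cycle C leads into ob' - ob, taking the one in r' inside ob' and one
  realising the shortest distance elsewhere. Following successors inside this finite consistent
  selection closes a cycle that avoids ob, hence a relevant 1-embedding by (2) and (3). The
  distance decreases until ob' - ob is reached, so the cycle meets r', and its valuation violates
  the garbage property of (ob', r').\<close>

lemma key_equal_refl [simp]: "key_equal S A A"
  by (simp add: key_equal_def)

lemma key_equal_sym: "key_equal S A B \<Longrightarrow> key_equal S B A"
  by (auto simp: key_equal_def)

lemma key_equal_trans: "key_equal S A B \<Longrightarrow> key_equal S B C \<Longrightarrow> key_equal S A C"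
  by (auto simp: key_equal_def)

lemma frel_inst [simp]: "frel (inst \<theta> F) = arel F"
  by (simp add: inst_def)

lemma key_equal_atom_of: "key_equal S A B \<Longrightarrow> atom_of q A = atom_of q B"
  by (simp add: key_equal_def atom_of_def)

lemma block_key_equal: "key_equal S A B \<Longrightarrow> block S db A = block S db B"
  by (auto simp: block_def key_equal_def)

lemma inst_eq_imp_agree:
  assumes "inst \<theta> F = inst \<theta>' F" and "v \<in> atom_vars F"
  shows "\<theta> v = \<theta>' v"
  using assms unfolding inst_def atom_vars_def
  by (auto simp: map_eq_conv trm_val_def split: trm.splits dest!: bspec)

lemma key_equal_inst_if_agree:
  assumes "\<forall>v\<in>key_vars S G. \<theta> v = \<theta>' v"
  shows "key_equal S (inst \<theta> G) (inst \<theta>' G)"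
proof -
  have "trm_val \<theta> t = trm_val \<theta>' t" if t: "t \<in> set (take (keylen S (arel G)) (aargs G))" for t
  proof -
    obtain i where "i < length (take (keylen S (arel G)) (aargs G))"
      "take (keylen S (arel G)) (aargs G) ! i = t"
      using t unfolding in_set_conv_nth by blast
    then have "i < keylen S (arel G)" "i < length (aargs G)" "aargs G ! i = t"
      by simp_all
    then show ?thesis
      using assms by (cases t) (auto simp: trm_val_def key_vars_def)
  qed
  then show ?thesis
    by (simp add: key_equal_def inst_def take_map map_eq_conv)
qed

lemma fd_implies_agree:
  fixes \<theta> \<theta>' :: "'v \<Rightarrow> 'c"
  assumes "fd_implies \<Sigma> X Y"
    and "\<And>Z W. (Z, W) \<in> \<Sigma> \<Longrightarrow> \<forall>v\<in>Z. \<theta> v = \<theta>' v \<Longrightarrow> \<forall>v\<in>W. \<theta> v = \<theta>' v"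
    and "\<forall>v\<in>X. \<theta> v = \<theta>' v"
  shows "\<forall>v\<in>Y. \<theta> v = \<theta>' v"
proof -
  \<comment> \<open>The zero tuple and the indicator of the variables where the valuations disagree.\<close>
  define R :: "('v \<Rightarrow> nat) set"
    where "R = {\<lambda>_. 0, \<lambda>v. if \<theta> v = \<theta>' v then 0 else 1}"
  have sat_iff: "fd_sat R (Z, W) \<longleftrightarrow> ((\<forall>v\<in>Z. \<theta> v = \<theta>' v) \<longrightarrow> (\<forall>v\<in>W. \<theta> v = \<theta>' v))"
    for Z W
    unfolding fd_sat_def R_def by (auto split: if_splits)
  have "\<forall>d\<in>\<Sigma>. fd_sat R d"
    using assms(2) sat_iff by auto
  then have "fd_sat R (X, Y)"
    using assms(1) unfolding fd_implies_def by blast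
  then show ?thesis
    using assms(3) sat_iff by blast
qed

lemma repair_covers:
  assumes "is_repair S ob r" and "A \<in> ob"
  shows "\<exists>B\<in>r. key_equal S A B"
proof (cases "A \<in> r")
  case False
  with assms have "\<not> consistent S (insert A r)"
    unfolding is_repair_def by blast
  moreover have "consistent S r"
    using assms(1) by (simp add: is_repair_def)
  ultimately show ?thesis
    unfolding consistent_def by (blast dest: key_equal_sym)
qed (use key_equal_refl in blast)

lemma is_repairI:
  assumes "r \<subseteq> ob" and "consistent S r" and "\<forall>A\<in>ob. \<exists>B\<in>r. key_equal S A B"
  shows "is_repair S ob r"
  unfolding is_repair_def
proof (intro conjI allI impI notI)
  fix r' assume "r \<subset> r' \<and> r' \<subseteq> ob" and "consistent S r'"
  then obtain A where "A \<in> r'" "A \<notin> r" "A \<in> ob"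
    by blast
  then obtain B where "B \<in> r" "key_equal S A B"
    using assms(3) by blast
  then show False
    using \<open>A \<in> r'\<close> \<open>A \<notin> r\<close> \<open>r \<subset> r' \<and> r' \<subseteq> ob\<close> \<open>consistent S r'\<close>
    unfolding consistent_def by blast
qed (use assms in auto)

lemma consistent_Un:
  assumes "consistent S r" and "consistent S T" and "\<forall>A\<in>r. \<forall>B\<in>T. \<not> key_equal S A B"
  shows "consistent S (r \<union> T)"
  using assms key_equal_sym unfolding consistent_def by blast

section \<open>Cycles of a self-map of a finite set\<close>

lemma finite_self_map_periodic_point:
  assumes "finite A" and "f ` A \<subseteq> A" and "x \<in> A"
  obtains y p where "y \<in> A" and "0 < p" and "(f ^^ p) y = y"
proof -
  have orbit_in_A: "(f ^^ m) x \<in> A" for m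
    using assms(2,3) by (induction m) auto
  have "\<not> inj_on (\<lambda>m. (f ^^ m) x) {0..card A}"
  proof
    assume "inj_on (\<lambda>m. (f ^^ m) x) {0..card A}"
    then have "card {0..card A} \<le> card A"
      using card_inj_on_le[OF _ _ assms(1)] orbit_in_A by blast
    then show False by simp
  qed
  then obtain i j where "i < j" "(f ^^ i) x = (f ^^ j) x"
    unfolding inj_on_def by (metis linorder_neqE_nat)
  have "(f ^^ (j - i)) ((f ^^ i) x) = (f ^^ j) x"
    using \<open>i < j\<close> by (simp flip: funpow_add[unfolded comp_def, THEN fun_cong])
  then have "(f ^^ (j - i)) ((f ^^ i) x) = (f ^^ i) x"
    using \<open>(f ^^ i) x = (f ^^ j) x\<close> by simp
  then show thesis
    using that[of "(f ^^ i) x" "j - i"] orbit_in_A \<open>i < j\<close> by simp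
qed

lemma finite_self_map_has_cycle:
  assumes "finite A" and "f ` A \<subseteq> A" and "x \<in> A"
  obtains cs where "cs \<noteq> []" "distinct cs" "set cs \<subseteq> A"
    "\<And>j. j < length cs \<Longrightarrow> cs ! (Suc j mod length cs) = f (cs ! j)"
proof -
  obtain y p0 where "y \<in> A" "0 < p0" "(f ^^ p0) y = y"
    using finite_self_map_periodic_point[OF assms] .
  define p where "p = (LEAST p. 0 < p \<and> (f ^^ p) y = y)"
  have p: "0 < p" "(f ^^ p) y = y"
    using LeastI[of "\<lambda>p. 0 < p \<and> (f ^^ p) y = y"] \<open>0 < p0\<close> \<open>(f ^^ p0) y = y\<close>
    by (simp_all add: p_def)
  have "(f ^^ m) y \<noteq> y" if "0 < m" "m < p" for m
    using not_less_Least[of m "\<lambda>p. 0 < p \<and> (f ^^ p) y = y"] that by (simp add: p_def)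
  then have inj: "inj_on (\<lambda>m. (f ^^ m) y) {0..<p}"
    by (rule inj_on_funpow_least[OF p(2)])
  have orbit_in_A: "(f ^^ m) y \<in> A" for m
    using assms(2) \<open>y \<in> A\<close> by (induction m) auto
  define cs where "cs = map (\<lambda>m. (f ^^ m) y) [0..<p]"
  show thesis
  proof
    show "cs \<noteq> []" "distinct cs" "set cs \<subseteq> A"
      using p(1) inj orbit_in_A by (auto simp: cs_def distinct_map)
    fix m assume "m < length cs"
    then show "cs ! (Suc m mod length cs) = f (cs ! m)"
      using p by (cases "Suc m = p") (simp_all add: cs_def, metis comp_apply funpow.simps(2))
  qed
qed

locale mgraph_cycle_db =
  fixes S :: "'r schema" and q :: "('r, 'v, 'c) atom set" and db :: "('r, 'c) fact set"
    and Fs :: "('r, 'v, 'c) atom list"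
  assumes sjf: "sjf_query S q" and cycle: "mgraph_cycle S q Fs" and db: "is_db S q db"
begin

abbreviation k :: nat where "k \<equiv> length Fs"

lemma length_Fs_ge_2: "2 \<le> k"
  using cycle by (simp add: mgraph_cycle_def)

lemma length_Fs_pos: "0 < k"
  using length_Fs_ge_2 by linarith

lemma distinct_Fs: "distinct Fs"
  using cycle by (simp add: mgraph_cycle_def)

lemma mgraph_edge_nth: "i < k \<Longrightarrow> mgraph_edge S q (Fs ! i) (Fs ! (Suc i mod k))"
  using cycle by (simp add: mgraph_cycle_def)

lemma set_Fs_subset: "set Fs \<subseteq> q"
proof
  fix F assume "F \<in> set Fs"
  then obtain i where "i < k" "F = Fs ! i"
    by (metis in_set_conv_nth)
  then show "F \<in> q"
    using mgraph_edge_nth[of i] by (simp add: mgraph_edge_def)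
qed

lemma finite_db: "finite db"
  using db by (simp add: is_db_def)

lemma atom_of_inst [simp]: "F \<in> q \<Longrightarrow> atom_of q (inst \<theta> F) = F"
  using sjf unfolding atom_of_def sjf_query_def
  by (auto intro: the_equality dest: inj_onD)

lemma cyc_edge_nth: "cyc_edge Fs (Fs ! i) G \<Longrightarrow> i < k \<Longrightarrow> G = Fs ! (Suc i mod k)"
  using distinct_Fs by (auto simp: cyc_edge_def nth_eq_iff_index_eq)

lemma hookC_db: "hookC S q db Fs A B \<Longrightarrow> A \<in> db \<and> B \<in> db"
  by (simp add: hookC_def hook_def)

lemma hookC_atoms: "hookC S q db Fs A B \<Longrightarrow> atom_of q A \<in> set Fs \<and> atom_of q B \<in> set Fs"
  by (simp add: hookC_def)

lemma hookC_atom_next: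
  "hookC S q db Fs A B \<Longrightarrow> atom_of q A = Fs ! i \<Longrightarrow> i < k \<Longrightarrow> atom_of q B = Fs ! (Suc i mod k)"
  unfolding hookC_def using cyc_edge_nth by auto

lemma hookC_inst:
  assumes "inst \<theta> ` q \<subseteq> db" and "i < k"
  shows "hookC S q db Fs (inst \<theta> (Fs ! i)) (inst \<theta> (Fs ! (Suc i mod k)))"
proof -
  have "Suc i mod k < k"
    using length_Fs_pos by simp
  then have in_Fs: "Fs ! i \<in> set Fs" "Fs ! (Suc i mod k) \<in> set Fs"
    using assms(2) by simp_all
  then have in_q: "Fs ! i \<in> q" "Fs ! (Suc i mod k) \<in> q"
    using set_Fs_subset by blast+
  have "hook S q db (inst \<theta> (Fs ! i)) (inst \<theta> (Fs ! (Suc i mod k)))"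
    unfolding hook_def using assms in_q mgraph_edge_nth key_equal_refl by blast
  moreover have "cyc_edge Fs (Fs ! i) (Fs ! (Suc i mod k))"
    unfolding cyc_edge_def using assms(2) by auto
  ultimately show ?thesis
    unfolding hookC_def using in_Fs in_q by simp
qed

lemma hookC_obtain_valuation:
  assumes "hookC S q db Fs A B"
  obtains \<theta> i where "i < k" "inst \<theta> ` q \<subseteq> db" "A = inst \<theta> (Fs ! i)"
    "key_equal S B (inst \<theta> (Fs ! (Suc i mod k)))"
proof -
  obtain \<theta> F G where edge: "mgraph_edge S q F G" and \<theta>: "inst \<theta> ` q \<subseteq> db"
    and A: "A = inst \<theta> F" and B: "key_equal S B (inst \<theta> G)"
    using assms unfolding hookC_def hook_def by blast
  have "F \<in> q" "G \<in> q"
    using edge by (auto simp: mgraph_edge_def)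
  then have "atom_of q A = F" "atom_of q B = G"
    using A key_equal_atom_of[OF B, of q] by simp_all
  moreover obtain i where i: "i < k" "F = Fs ! i"
    using assms \<open>atom_of q A = F\<close> by (auto simp: hookC_def in_set_conv_nth)
  ultimately have "G = Fs ! (Suc i mod k)"
    using hookC_atom_next[OF assms] by simp
  then show thesis
    using that i \<theta> A B by blast
qed

lemma valuations_agree_Kfds:
  assumes "inst \<theta> ` q \<subseteq> db" and "inst \<theta>' ` q \<subseteq> db"
    and "(Z, W) \<in> Kfds S (qc S q)" and "\<forall>v\<in>Z. \<theta> v = \<theta>' v"
  shows "\<forall>v\<in>W. \<theta> v = \<theta>' v"
proof -
  obtain H where H: "H \<in> q" "rmode S (arel H) = ModeC" "Z = key_vars S H" "W = atom_vars H"
    using assms(3) by (auto simp: Kfds_def qc_def)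
  have "key_equal S (inst \<theta> H) (inst \<theta>' H)"
    using key_equal_inst_if_agree assms(4) H(3) by blast
  moreover have "inst \<theta> H \<in> db" "inst \<theta>' H \<in> db"
    using assms(1,2) H(1) by auto
  ultimately have "inst \<theta> H = inst \<theta>' H"
    using db H(2) unfolding is_db_def by simp
  then show ?thesis
    using inst_eq_imp_agree H(4) by metis
qed

lemma hookC_target_unique:
  assumes "hookC S q db Fs A B" and "hookC S q db Fs A B'"
  shows "key_equal S B B'"
proof -
  obtain \<theta> i where i: "i < k" and \<theta>: "inst \<theta> ` q \<subseteq> db" and A: "A = inst \<theta> (Fs ! i)"
    and B: "key_equal S B (inst \<theta> (Fs ! (Suc i mod k)))"
    using hookC_obtain_valuation[OF assms(1)] .
  obtain \<theta>' i' where i': "i' < k" and \<theta>': "inst \<theta>' ` q \<subseteq> db" and A': "A = inst \<theta>' (Fs ! i')"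
    and B': "key_equal S B' (inst \<theta>' (Fs ! (Suc i' mod k)))"
    using hookC_obtain_valuation[OF assms(2)] .
  have "Fs ! i = Fs ! i'"
    using A A' i i' set_Fs_subset atom_of_inst by (metis nth_mem subsetD)
  then have "i' = i"
    using i i' distinct_Fs by (simp add: nth_eq_iff_index_eq)
  have "\<forall>v\<in>atom_vars (Fs ! i). \<theta> v = \<theta>' v"
    using inst_eq_imp_agree A A' \<open>i' = i\<close> by metis
  then have "\<forall>v\<in>key_vars S (Fs ! (Suc i mod k)). \<theta> v = \<theta>' v"
    using fd_implies_agree mgraph_edge_nth[OF i] valuations_agree_Kfds[OF \<theta> \<theta>']
    unfolding mgraph_edge_def by blast
  then have "key_equal S (inst \<theta> (Fs ! (Suc i mod k))) (inst \<theta>' (Fs ! (Suc i mod k)))"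
    by (rule key_equal_inst_if_agree)
  then show ?thesis
    using B B' \<open>i' = i\<close> key_equal_sym key_equal_trans by metis
qed

lemma hookC_key_equal_target:
  assumes "hookC S q db Fs A B" and "key_equal S B B'" and "B' \<in> db"
  shows "hookC S q db Fs A B'"
  using assms key_equal_atom_of[OF assms(2)]
  unfolding hookC_def hook_def by (metis key_equal_sym key_equal_trans)

definition hook_cycle :: "('r, 'c) fact list \<Rightarrow> bool" where
  "hook_cycle cs \<longleftrightarrow> cs \<noteq> [] \<and>
     (\<forall>j < length cs. hookC S q db Fs (cs ! j) (cs ! (Suc j mod length cs)))"

lemma hook_cycle_atom_nth:
  assumes "hook_cycle cs" and "atom_of q (cs ! 0) = Fs ! i" and "i < k"
  shows "atom_of q (cs ! (j mod length cs)) = Fs ! ((i + j) mod k)"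
proof (induction j)
  case 0
  then show ?case using assms(2,3) by simp
next
  case (Suc j)
  have "j mod length cs < length cs"
    using assms(1) by (simp add: hook_cycle_def)
  then have "hookC S q db Fs (cs ! (j mod length cs)) (cs ! (Suc j mod length cs))"
    using assms(1) unfolding hook_cycle_def by (metis mod_Suc_eq)
  then have "atom_of q (cs ! (Suc j mod length cs)) = Fs ! (Suc ((i + j) mod k) mod k)"
    using hookC_atom_next Suc.IH length_Fs_pos by simp
  then show ?case
    by (simp add: mod_Suc_eq)
qed

lemma hook_cycle_length_dvd:
  assumes "hook_cycle cs"
  shows "k dvd length cs"
proof -
  have "hookC S q db Fs (cs ! 0) (cs ! (Suc 0 mod length cs))"
    using assms unfolding hook_cycle_def by blast
  then obtain i where i: "i < k" "atom_of q (cs ! 0) = Fs ! i"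
    using hookC_atoms by (metis in_set_conv_nth)
  have "Fs ! i = Fs ! ((i + length cs) mod k)"
    using hook_cycle_atom_nth[OF assms i(2,1), of "length cs"] i(2) by simp
  then have "(i + length cs) mod k = i mod k"
    using i(1) length_Fs_pos distinct_Fs by (simp add: nth_eq_iff_index_eq)
  then show ?thesis
    using mod_eq_dvd_iff_nat[where m = "i + length cs" and n = i and q = k] by simp
qed

lemma hook_cycle_next_key_equal:
  assumes "hook_cycle cs" and "j < length cs" and "hookC S q db Fs (cs ! j) B"
  shows "key_equal S (cs ! (Suc j mod length cs)) B"
  using assms hookC_target_unique unfolding hook_cycle_def by blast

lemma embedding_iff:
  "embedding S q db Fs n cs \<longleftrightarrow>
     hook_cycle cs \<and> distinct cs \<and> consistent S (set cs) \<and> length cs = n * k"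
proof -
  have "length cs = n * k \<Longrightarrow> 1 \<le> n \<longleftrightarrow> cs \<noteq> []"
    using length_Fs_pos by (cases n) auto
  then show ?thesis
    unfolding embedding_def hook_cycle_def Suc_eq_plus1 by blast
qed

lemma embedding_of_hook_cycle:
  "hook_cycle cs \<Longrightarrow> distinct cs \<Longrightarrow> consistent S (set cs) \<Longrightarrow>
     embedding S q db Fs (length cs div k) cs"
  using hook_cycle_length_dvd by (simp add: embedding_iff)

lemma embedding_facts:
  assumes "embedding S q db Fs n cs" and "x \<in> set cs"
  shows "x \<in> db" and "atom_of q x \<in> set Fs"
proof -
  obtain j where "j < length cs" "x = cs ! j"
    using assms(2) by (metis in_set_conv_nth)
  then have "hookC S q db Fs x (cs ! (Suc j mod length cs))"
    using assms(1) unfolding embedding_iff hook_cycle_def by blast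
  then show "x \<in> db" "atom_of q x \<in> set Fs"
    using hookC_db hookC_atoms by blast+
qed

lemma valuation_embedding:
  assumes "inst \<theta> ` q \<subseteq> db"
  shows "embedding S q db Fs 1 (map (inst \<theta>) Fs)" and "relevant q db (map (inst \<theta>) Fs)"
proof -
  have inj: "inj_on (inst \<theta>) (set Fs)"
  proof (rule inj_onI)
    fix F G assume "F \<in> set Fs" "G \<in> set Fs" "inst \<theta> F = inst \<theta> G"
    then have "atom_of q (inst \<theta> F) = atom_of q (inst \<theta> G)" "F \<in> q" "G \<in> q"
      using set_Fs_subset by auto
    then show "F = G"
      by simp
  qed
  have "hook_cycle (map (inst \<theta>) Fs)"
    unfolding hook_cycle_def
  proof (intro conjI allI impI)
    fix j assume "j < length (map (inst \<theta>) Fs)"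
    moreover have "Suc j mod k < k"
      using length_Fs_pos by simp
    ultimately show "hookC S q db Fs (map (inst \<theta>) Fs ! j)
        (map (inst \<theta>) Fs ! (Suc j mod length (map (inst \<theta>) Fs)))"
      using hookC_inst[OF assms] by simp
  qed (use length_Fs_pos in simp)
  moreover have "consistent S (inst \<theta> ` set Fs)"
    unfolding consistent_def
  proof (intro ballI impI)
    fix A B assume "A \<in> inst \<theta> ` set Fs" "B \<in> inst \<theta> ` set Fs" "key_equal S A B"
    then obtain F G where "F \<in> q" "G \<in> q" "A = inst \<theta> F" "B = inst \<theta> G"
      "atom_of q A = atom_of q B"
      using set_Fs_subset key_equal_atom_of by blast
    then show "A = B"
      by simp
  qed
  ultimately show "embedding S q db Fs 1 (map (inst \<theta>) Fs)"
    using inj distinct_Fs by (simp add: embedding_iff distinct_map)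
  show "relevant q db (map (inst \<theta>) Fs)"
    unfolding relevant_def using assms set_Fs_subset by (intro exI[of _ \<theta>]) auto
qed

lemma embedding_atoms:
  assumes "embedding S q db Fs n cs"
  shows "atom_of q ` set cs = set Fs"
proof
  show "atom_of q ` set cs \<subseteq> set Fs"
    using embedding_facts[OF assms] by blast
  have cycle: "hook_cycle cs"
    using assms by (simp add: embedding_iff)
  then obtain i where i: "i < k" "atom_of q (cs ! 0) = Fs ! i"
    using embedding_facts(2)[OF assms] by (metis hook_cycle_def in_set_conv_nth length_greater_0_conv)
  show "set Fs \<subseteq> atom_of q ` set cs"
  proof
    fix F assume "F \<in> set Fs"
    then obtain i' where "i' < k" "F = Fs ! i'"
      by (metis in_set_conv_nth)
    then have "atom_of q (cs ! ((i' + k - i) mod length cs)) = F"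
      using hook_cycle_atom_nth[OF cycle i(2,1), of "i' + k - i"] i(1) by simp
    moreover have "(i' + k - i) mod length cs < length cs"
      using cycle by (simp add: hook_cycle_def)
    ultimately show "F \<in> atom_of q ` set cs"
      by (metis image_eqI nth_mem)
  qed
qed

lemma relevant_embedding_facts:
  assumes "embedding S q db Fs n cs" and "set cs \<subseteq> inst \<theta> ` q"
  shows "set cs = inst \<theta> ` set Fs"
proof -
  have c: "c = inst \<theta> (atom_of q c)" if "c \<in> set cs" for c
    using that assms(2) by auto
  show ?thesis
  proof
    show "set cs \<subseteq> inst \<theta> ` set Fs"
      using c embedding_atoms[OF assms(1)] by blast
    show "inst \<theta> ` set Fs \<subseteq> set cs"
    proof
      fix A assume "A \<in> inst \<theta> ` set Fs"
      then obtain x where "x \<in> set cs" "A = inst \<theta> (atom_of q x)"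
        using embedding_atoms[OF assms(1)] by (metis imageE)
      then show "A \<in> set cs"
        using c by simp
    qed
  qed
qed

lemma embedding_through_valuation:
  assumes emb: "embedding S q db Fs n cs" and \<theta>: "inst \<theta> ` q \<subseteq> db"
    and sub: "inst \<theta> ` set Fs \<subseteq> set cs"
  shows "n = 1" and "relevant q db cs"
proof -
  have cycle: "hook_cycle cs" and cons: "consistent S (set cs)"
    and len: "length cs = n * k" and dist: "distinct cs"
    using emb by (simp_all add: embedding_iff)
  obtain a where a: "a < length cs" "cs ! a = inst \<theta> (Fs ! 0)"
    using sub length_Fs_pos by (metis image_subset_iff in_set_conv_nth nth_mem)
  have closed: "cs ! (Suc j mod length cs) \<in> inst \<theta> ` set Fs"
    if j: "j < length cs" and j_in: "cs ! j \<in> inst \<theta> ` set Fs" for j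
  proof -
    obtain i where i: "i < k" "cs ! j = inst \<theta> (Fs ! i)"
      using j_in by (metis imageE in_set_conv_nth)
    have "Suc i mod k < k"
      using length_Fs_pos by simp
    then have next_in: "inst \<theta> (Fs ! (Suc i mod k)) \<in> set cs"
      using sub by auto
    have "key_equal S (cs ! (Suc j mod length cs)) (inst \<theta> (Fs ! (Suc i mod k)))"
      using hook_cycle_next_key_equal[OF cycle j] hookC_inst[OF \<theta> i(1)] i(2) by simp
    then have "cs ! (Suc j mod length cs) = inst \<theta> (Fs ! (Suc i mod k))"
      using cons next_in j cycle unfolding consistent_def hook_cycle_def by simp
    then show ?thesis
      using \<open>Suc i mod k < k\<close> by simp
  qed
  have "cs ! a \<in> inst \<theta> ` set Fs"
    using a(2) length_Fs_pos by simp
  then have "cs ! j \<in> inst \<theta> ` set Fs" if "j < length cs" for j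
    using mod_induct[where P = "\<lambda>j. cs ! j \<in> inst \<theta> ` set Fs"] a(1) that closed by blast
  then have facts: "set cs \<subseteq> inst \<theta> ` set Fs"
    by (auto simp: in_set_conv_nth)
  then have "length cs \<le> k"
    using dist card_mono[OF _ facts] card_image_le[of "set Fs" "inst \<theta>"]
    by (simp add: distinct_card distinct_Fs)
  then show "n = 1"
    using len cycle length_Fs_pos by (cases n) (auto simp: hook_cycle_def)
  show "relevant q db cs"
    unfolding relevant_def using \<theta> facts set_Fs_subset by blast
qed

end

locale lemma19_setting = mgraph_cycle_db S q db Fs
  for S :: "'r schema" and q :: "('r, 'v, 'c) atom set" and db :: "('r, 'c) fact set"
    and Fs :: "('r, 'v, 'c) atom list" +
  fixes ob :: "('r, 'c) fact set"
  assumes conds: "lemma19_conds S q db Fs ob"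
begin

lemma ob_subset_db: "ob \<subseteq> db"
  using conds by (simp add: lemma19_conds_def)

lemma outdeg_zero_in_ob: "outdeg_zero S q db Fs A \<Longrightarrow> A \<in> ob"
  using conds by (simp add: lemma19_conds_def)

lemma irrelevant_embedding_in_ob:
  "embedding S q db Fs 1 cs \<Longrightarrow> \<not> relevant q db cs \<Longrightarrow> set cs \<subseteq> ob"
  using conds by (simp add: lemma19_conds_def)

lemma multiple_embedding_in_ob: "2 \<le> n \<Longrightarrow> embedding S q db Fs n cs \<Longrightarrow> set cs \<subseteq> ob"
  using conds by (simp add: lemma19_conds_def)

lemma relevant_embedding_in_ob:
  "embedding S q db Fs 1 cs \<Longrightarrow> relevant q db cs \<Longrightarrow> set cs \<inter> ob \<noteq> {} \<Longrightarrow> set cs \<subseteq> ob"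
  using conds by (simp add: lemma19_conds_def)

lemma block_in_ob: "A \<in> ob \<Longrightarrow> block S db A \<subseteq> ob"
  using conds by (simp add: lemma19_conds_def)

lemma key_equal_in_ob: "A \<in> ob \<Longrightarrow> key_equal S A B \<Longrightarrow> B \<in> db \<Longrightarrow> B \<in> ob"
  using block_in_ob by (auto simp: block_def)

lemma valuation_meets_ob:
  assumes "inst \<theta> ` q \<subseteq> db" and "F \<in> set Fs" and "inst \<theta> F \<in> ob"
  shows "inst \<theta> ` set Fs \<subseteq> ob"
proof -
  have "set (map (inst \<theta>) Fs) \<inter> ob \<noteq> {}"
    using assms(2,3) by auto
  then have "set (map (inst \<theta>) Fs) \<subseteq> ob"
    using relevant_embedding_in_ob valuation_embedding[OF assms(1)] by blast
  then show ?thesis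
    by simp
qed

lemma hookC_outside_ob:
  assumes "hookC S q db Fs A B" and "A \<notin> ob"
  shows "B \<notin> ob"
proof
  assume "B \<in> ob"
  obtain \<theta> i where i: "i < k" and \<theta>: "inst \<theta> ` q \<subseteq> db" and A: "A = inst \<theta> (Fs ! i)"
    and B: "key_equal S B (inst \<theta> (Fs ! (Suc i mod k)))"
    using hookC_obtain_valuation[OF assms(1)] .
  have "Suc i mod k < k"
    using length_Fs_pos by simp
  then have "inst \<theta> (Fs ! (Suc i mod k)) \<in> db"
    using \<theta> set_Fs_subset by (meson image_subset_iff nth_mem subsetD)
  then have "inst \<theta> (Fs ! (Suc i mod k)) \<in> ob"
    using key_equal_in_ob[OF \<open>B \<in> ob\<close> B] by blast
  then have "inst \<theta> ` set Fs \<subseteq> ob"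
    using valuation_meets_ob[OF \<theta> nth_mem[OF \<open>Suc i mod k < k\<close>]] by blast
  then show False
    using A i assms(2) nth_mem by blast
qed

lemma hook_cycle_outside_ob:
  assumes cycle: "hook_cycle cs" and "distinct cs" and "consistent S (set cs)"
    and outside: "set cs \<inter> ob = {}"
  shows "embedding S q db Fs 1 cs" and "relevant q db cs"
proof -
  have emb: "embedding S q db Fs (length cs div k) cs"
    using embedding_of_hook_cycle assms(1-3) by blast
  have "\<not> set cs \<subseteq> ob"
    using cycle outside by (metis hook_cycle_def inf.absorb1 set_empty)
  then have "length cs div k < 2"
    using multiple_embedding_in_ob[OF _ emb] by (meson not_le)
  moreover have "length cs div k \<noteq> 0"
    using emb cycle unfolding embedding_iff hook_cycle_def by (metis length_0_conv mult_zero_left)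
  ultimately show emb1: "embedding S q db Fs 1 cs"
    using emb by (metis One_nat_def less_2_cases)
  show "relevant q db cs"
    using irrelevant_embedding_in_ob[OF emb1] \<open>\<not> set cs \<subseteq> ob\<close> by blast
qed

section \<open>The set ob is a garbage set\<close>

text \<open>The pairs (P, r) are grown from ({}, {}) up to (ob, r). The condition on the
  successors of the facts of r is what keeps the last clause valid when facts are added to r.\<close>

definition partial_garbage :: "('r, 'c) fact set \<Rightarrow> ('r, 'c) fact set \<Rightarrow> bool" where
  "partial_garbage P r \<longleftrightarrow> P \<subseteq> ob \<and> (\<forall>A\<in>P. atom_of q A \<in> set Fs \<and> block S db A \<subseteq> P) \<and>
     r \<subseteq> P \<and> consistent S r \<and> (\<forall>A\<in>P. \<exists>B\<in>r. key_equal S A B) \<and>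
     (\<forall>A\<in>r. \<forall>B. hookC S q db Fs A B \<longrightarrow> B \<in> P) \<and>
     (\<forall>\<theta>. inst \<theta> ` q \<subseteq> db \<longrightarrow> \<not> inst \<theta> ` set Fs \<subseteq> r)"

lemma partial_garbage_empty: "partial_garbage {} {}"
  using length_Fs_pos by (auto simp: partial_garbage_def consistent_def)

lemma partial_garbage_key_equal:
  "partial_garbage P r \<Longrightarrow> A \<in> P \<Longrightarrow> key_equal S A B \<Longrightarrow> B \<in> db \<Longrightarrow> B \<in> P"
  unfolding partial_garbage_def block_def by blast

lemma valuation_outside_partial_garbage:
  assumes pg: "partial_garbage P r" and "T \<inter> P = {}"
    and \<theta>: "inst \<theta> ` q \<subseteq> db" and sub: "inst \<theta> ` set Fs \<subseteq> r \<union> T"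
  shows "inst \<theta> ` set Fs \<subseteq> T"
proof -
  have "r \<subseteq> P"
    using pg by (simp add: partial_garbage_def)
  have not_P: "inst \<theta> (Fs ! i) \<notin> P" if "i < k" for i
  proof
    assume "inst \<theta> (Fs ! i) \<in> P"
    have step: "inst \<theta> (Fs ! (Suc j mod k)) \<in> P" if "j < k" "inst \<theta> (Fs ! j) \<in> P" for j
    proof -
      have "inst \<theta> (Fs ! j) \<in> r \<union> T"
        using sub nth_mem[OF that(1)] by blast
      then have "inst \<theta> (Fs ! j) \<in> r"
        using that(2) \<open>T \<inter> P = {}\<close> by blast
      then show ?thesis
        using pg hookC_inst[OF \<theta> that(1)] unfolding partial_garbage_def by blast
    qed
    have in_P: "inst \<theta> (Fs ! j) \<in> P" if "j < k" for j
      using mod_induct[where P = "\<lambda>j. inst \<theta> (Fs ! j) \<in> P"] \<open>inst \<theta> (Fs ! i) \<in> P\<close>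
        \<open>i < k\<close> that step by blast
    have "inst \<theta> ` set Fs \<subseteq> r"
    proof
      fix A assume A: "A \<in> inst \<theta> ` set Fs"
      then obtain j where "j < k" "A = inst \<theta> (Fs ! j)"
        by (auto simp: in_set_conv_nth)
      then show "A \<in> r"
        using in_P A sub \<open>T \<inter> P = {}\<close> by blast
    qed
    then show False
      using pg \<theta> by (simp add: partial_garbage_def)
  qed
  show ?thesis
  proof
    fix A assume A: "A \<in> inst \<theta> ` set Fs"
    then obtain j where "j < k" "A = inst \<theta> (Fs ! j)"
      by (auto simp: in_set_conv_nth)
    then show "A \<in> T"
      using not_P A sub \<open>r \<subseteq> P\<close> by blast
  qed
qed

lemma partial_garbage_consistent_Un:
  assumes pg: "partial_garbage P r" and "T \<subseteq> db" and "T \<inter> P = {}" and "consistent S T"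
  shows "consistent S (r \<union> T)"
proof (rule consistent_Un)
  show "consistent S r"
    using pg by (simp add: partial_garbage_def)
  show "\<forall>A\<in>r. \<forall>B\<in>T. \<not> key_equal S A B"
  proof (intro ballI notI)
    fix A B assume "A \<in> r" "B \<in> T" "key_equal S A B"
    moreover have "A \<in> P"
      using pg \<open>A \<in> r\<close> by (auto simp: partial_garbage_def)
    ultimately have "B \<in> P"
      using partial_garbage_key_equal[OF pg] \<open>T \<subseteq> db\<close> by blast
    then show False
      using \<open>B \<in> T\<close> \<open>T \<inter> P = {}\<close> by blast
  qed
qed (fact \<open>consistent S T\<close>)

lemma partial_garbage_extend_blocks:
  assumes pg: "partial_garbage P r" and T: "\<forall>A\<in>T. atom_of q A \<in> set Fs"
    and "A \<in> P \<union> (\<Union>B\<in>T. block S db B)"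
  shows "atom_of q A \<in> set Fs" and "block S db A \<subseteq> P \<union> (\<Union>B\<in>T. block S db B)"
    and "\<exists>B\<in>r \<union> T. key_equal S A B"
proof -
  consider "A \<in> P" | C where "C \<in> T" "key_equal S C A"
    using assms(3) by (auto simp: block_def)
  then have "atom_of q A \<in> set Fs \<and> block S db A \<subseteq> P \<union> (\<Union>B\<in>T. block S db B) \<and>
      (\<exists>B\<in>r \<union> T. key_equal S A B)"
  proof cases
    case 1
    then have "atom_of q A \<in> set Fs" "block S db A \<subseteq> P" "\<exists>B\<in>r. key_equal S A B"
      using pg unfolding partial_garbage_def by blast+
    then show ?thesis
      by blast
  next
    case (2 C)
    have "block S db A \<subseteq> block S db C"
      using 2(2) by (auto simp: block_def dest: key_equal_trans)
    moreover have "atom_of q A \<in> set Fs"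
      using 2(1) T key_equal_atom_of[OF 2(2), of q] by metis
    moreover have "\<exists>B\<in>r \<union> T. key_equal S A B"
      using 2 key_equal_sym by blast
    ultimately show ?thesis
      using 2(1) by blast
  qed
  then show "atom_of q A \<in> set Fs" "block S db A \<subseteq> P \<union> (\<Union>B\<in>T. block S db B)"
    "\<exists>B\<in>r \<union> T. key_equal S A B"
    by simp_all
qed

lemma partial_garbage_extend:
  assumes pg: "partial_garbage P r"
    and T: "T \<subseteq> ob" "T \<noteq> {}" "T \<inter> P = {}" "consistent S T" "\<forall>A\<in>T. atom_of q A \<in> set Fs"
    and succ: "\<forall>A\<in>T. \<forall>B. hookC S q db Fs A B \<longrightarrow> B \<in> P \<union> (\<Union>A\<in>T. block S db A)"
    and no_valuation: "\<forall>\<theta>. inst \<theta> ` q \<subseteq> db \<longrightarrow> \<not> inst \<theta> ` set Fs \<subseteq> T"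
  shows "\<exists>P' r'. partial_garbage P' r' \<and> P \<subset> P'"
proof -
  let ?P' = "P \<union> (\<Union>A\<in>T. block S db A)" and ?r' = "r \<union> T"
  have "T \<subseteq> db"
    using T(1) ob_subset_db by blast
  have T_sub: "T \<subseteq> ?P'"
    using \<open>T \<subseteq> db\<close> by (auto simp: block_def)
  have "partial_garbage ?P' ?r'"
    unfolding partial_garbage_def
  proof (intro conjI ballI allI impI)
    show "?P' \<subseteq> ob"
      using pg T(1) block_in_ob by (auto simp: partial_garbage_def)
    show "?r' \<subseteq> ?P'"
      using pg T_sub by (auto simp: partial_garbage_def)
    show "consistent S ?r'"
      using partial_garbage_consistent_Un[OF pg \<open>T \<subseteq> db\<close> T(3,4)] .
  next
    fix A assume "A \<in> ?P'"
    then show "atom_of q A \<in> set Fs" "block S db A \<subseteq> ?P'" "\<exists>B\<in>?r'. key_equal S A B"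
      using partial_garbage_extend_blocks[OF pg T(5)] by blast+
  next
    fix A B assume "A \<in> ?r'" and hook: "hookC S q db Fs A B"
    then consider "A \<in> r" | "A \<in> T"
      by blast
    then show "B \<in> ?P'"
    proof cases
      case 1
      then have "B \<in> P"
        using pg hook by (simp add: partial_garbage_def)
      then show ?thesis
        by simp
    qed (use succ hook in blast)
  next
    fix \<theta> :: "'v \<Rightarrow> 'c" assume \<theta>: "inst \<theta> ` q \<subseteq> db"
    show "\<not> inst \<theta> ` set Fs \<subseteq> ?r'"
      using valuation_outside_partial_garbage[OF pg T(3) \<theta>] no_valuation \<theta> by blast
  qed
  moreover have "P \<subset> ?P'"
    using T(2,3) T_sub by blast
  ultimately show ?thesis
    by blast
qed

lemma partial_garbage_add_fact:
  assumes pg: "partial_garbage P r" and A: "A \<in> ob" "A \<notin> P" "atom_of q A \<in> set Fs"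
    and succ: "\<forall>B. hookC S q db Fs A B \<longrightarrow> B \<in> P"
  shows "\<exists>P' r'. partial_garbage P' r' \<and> P \<subset> P'"
proof (rule partial_garbage_extend[OF pg, of "{A}"])
  show "\<forall>\<theta>. inst \<theta> ` q \<subseteq> db \<longrightarrow> \<not> inst \<theta> ` set Fs \<subseteq> {A}"
  proof (intro allI impI notI)
    fix \<theta> :: "'v \<Rightarrow> 'c" assume \<theta>: "inst \<theta> ` q \<subseteq> db" and "inst \<theta> ` set Fs \<subseteq> {A}"
    then have "card (inst \<theta> ` set Fs) \<le> 1"
      using card_mono[of "{A}"] by simp
    moreover have "card (inst \<theta> ` set Fs) = k"
      using valuation_embedding(1)[OF \<theta>] distinct_card[of "map (inst \<theta>) Fs"]
      by (simp add: embedding_iff)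
    ultimately show False
      using length_Fs_ge_2 by simp
  qed
qed (use A succ in \<open>simp_all add: consistent_def\<close>)

lemma partial_garbage_add_relevant_embedding:
  assumes pg: "partial_garbage P r" and emb: "embedding S q db Fs 1 cs" and rel: "relevant q db cs"
    and meets: "set cs \<inter> P \<noteq> {}" and not_sub: "\<not> set cs \<subseteq> P"
  shows "\<exists>P' r'. partial_garbage P' r' \<and> P \<subset> P'"
proof -
  let ?L = "length cs"
  have cycle: "hook_cycle cs"
    using emb by (simp add: embedding_iff)
  have "\<exists>p<?L. cs ! p \<notin> P \<and> cs ! (Suc p mod ?L) \<in> P"
  proof (rule ccontr)
    assume "\<not> ?thesis"
    then have step: "cs ! (Suc p mod ?L) \<notin> P" if "p < ?L" "cs ! p \<notin> P" for p
      using that by blast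
    obtain x where "x \<in> set cs" "x \<notin> P"
      using not_sub by blast
    then obtain b where "b < ?L" "cs ! b \<notin> P"
      by (metis in_set_conv_nth)
    then have "cs ! j \<notin> P" if "j < ?L" for j
      using mod_induct[where P = "\<lambda>j. cs ! j \<notin> P"] step that by blast
    then show False
      using meets by (auto simp: in_set_conv_nth)
  qed
  then obtain p where p: "p < ?L" "cs ! p \<notin> P" "cs ! (Suc p mod ?L) \<in> P"
    by blast
  have "P \<subseteq> ob"
    using pg by (simp add: partial_garbage_def)
  then have "set cs \<subseteq> ob"
    using relevant_embedding_in_ob[OF emb rel] meets by blast
  then have "cs ! p \<in> ob" "atom_of q (cs ! p) \<in> set Fs"
    using p(1) embedding_facts(2)[OF emb] by auto
  moreover have "B \<in> P" if "hookC S q db Fs (cs ! p) B" for B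
  proof -
    have "key_equal S (cs ! (Suc p mod ?L)) B"
      using hook_cycle_next_key_equal[OF cycle p(1) that] .
    then show ?thesis
      using partial_garbage_key_equal[OF pg p(3)] hookC_db[OF that] by blast
  qed
  ultimately show ?thesis
    using partial_garbage_add_fact[OF pg _ p(2)] by blast
qed

lemma partial_garbage_add_embedding:
  assumes pg: "partial_garbage P r" and emb: "embedding S q db Fs n cs"
    and not_relevant: "\<not> (n = 1 \<and> relevant q db cs)"
    and "set cs \<subseteq> ob" and not_sub: "\<not> set cs \<subseteq> P"
  shows "\<exists>P' r'. partial_garbage P' r' \<and> P \<subset> P'"
proof (rule partial_garbage_extend[OF pg, of "set cs - P"])
  have cycle: "hook_cycle cs" and cons: "consistent S (set cs)"
    using emb by (simp_all add: embedding_iff)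
  show "consistent S (set cs - P)"
    using cons by (simp add: consistent_def)
  show "\<forall>A\<in>set cs - P. \<forall>B. hookC S q db Fs A B \<longrightarrow> B \<in> P \<union> (\<Union>A\<in>set cs - P. block S db A)"
  proof (intro ballI allI impI)
    fix A B assume "A \<in> set cs - P" and hook: "hookC S q db Fs A B"
    then obtain j where j: "j < length cs" "A = cs ! j"
      by (auto simp: in_set_conv_nth)
    let ?next = "cs ! (Suc j mod length cs)"
    have "key_equal S ?next B"
      using hook_cycle_next_key_equal[OF cycle j(1)] hook j(2) by simp
    moreover have "?next \<in> set cs"
      using cycle by (simp add: hook_cycle_def)
    moreover have "B \<in> db"
      using hookC_db[OF hook] by blast
    ultimately show "B \<in> P \<union> (\<Union>A\<in>set cs - P. block S db A)"
    proof (cases "?next \<in> P")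
      case True
      then show ?thesis
        using partial_garbage_key_equal[OF pg] \<open>key_equal S ?next B\<close> \<open>B \<in> db\<close> by blast
    next
      case False
      then have "B \<in> block S db ?next" "?next \<in> set cs - P"
        using \<open>key_equal S ?next B\<close> \<open>B \<in> db\<close> \<open>?next \<in> set cs\<close> by (simp_all add: block_def)
      then show ?thesis
        by blast
    qed
  qed
  show "\<forall>\<theta>. inst \<theta> ` q \<subseteq> db \<longrightarrow> \<not> inst \<theta> ` set Fs \<subseteq> set cs - P"
  proof (intro allI impI notI)
    fix \<theta> :: "'v \<Rightarrow> 'c" assume \<theta>: "inst \<theta> ` q \<subseteq> db" and "inst \<theta> ` set Fs \<subseteq> set cs - P"
    then have "inst \<theta> ` set Fs \<subseteq> set cs"
      by blast
    then show False
      using embedding_through_valuation[OF emb \<theta>] not_relevant by blast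
  qed
qed (use \<open>set cs \<subseteq> ob\<close> not_sub embedding_facts(2)[OF emb] in auto)

lemma maximal_partial_garbage_conds:
  assumes pg: "partial_garbage P r" and maximal: "\<not> (\<exists>P' r'. partial_garbage P' r' \<and> P \<subset> P')"
  shows "lemma19_conds S q db Fs P"
  unfolding lemma19_conds_def
proof (intro conjI allI impI ballI)
  show "P \<subseteq> db"
    using pg ob_subset_db by (auto simp: partial_garbage_def)
next
  fix A assume A: "outdeg_zero S q db Fs A"
  show "A \<in> P"
  proof (rule ccontr)
    assume "A \<notin> P"
    moreover have "atom_of q A \<in> set Fs" "\<forall>B. \<not> hookC S q db Fs A B"
      using A by (simp_all add: outdeg_zero_def)
    ultimately show False
      using partial_garbage_add_fact[OF pg outdeg_zero_in_ob[OF A]] maximal by blast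
  qed
next
  fix cs assume cs: "embedding S q db Fs 1 cs \<and> \<not> relevant q db cs"
  show "set cs \<subseteq> P"
  proof (rule ccontr)
    assume "\<not> set cs \<subseteq> P"
    moreover have "set cs \<subseteq> ob"
      using cs irrelevant_embedding_in_ob by blast
    ultimately show False
      using partial_garbage_add_embedding[OF pg, of 1 cs] cs maximal by blast
  qed
next
  fix n cs assume n: "2 \<le> n \<and> embedding S q db Fs n cs"
  show "set cs \<subseteq> P"
  proof (rule ccontr)
    assume "\<not> set cs \<subseteq> P"
    moreover have "set cs \<subseteq> ob" "\<not> (n = 1 \<and> relevant q db cs)"
      using n multiple_embedding_in_ob by auto
    ultimately show False
      using partial_garbage_add_embedding[OF pg, of n cs] n maximal by blast
  qed
next
  fix cs assume cs: "embedding S q db Fs 1 cs \<and> relevant q db cs \<and> set cs \<inter> P \<noteq> {}"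
  show "set cs \<subseteq> P"
  proof (rule ccontr)
    assume "\<not> set cs \<subseteq> P"
    then show False
      using partial_garbage_add_relevant_embedding[OF pg, of cs] cs maximal by blast
  qed
next
  fix A assume "A \<in> P"
  then show "block S db A \<subseteq> P"
    using pg by (simp add: partial_garbage_def)
qed

lemma partial_garbage_ob_garbage_set:
  assumes pg: "partial_garbage ob r"
  shows "garbage_set S q db (set Fs) ob"
proof -
  have "r \<subseteq> ob"
    using pg by (simp add: partial_garbage_def)
  have "is_repair S ob r"
    using pg by (intro is_repairI) (simp_all add: partial_garbage_def)
  moreover have "inst \<theta> ` set Fs \<inter> r = {}" if \<theta>: "inst \<theta> ` q \<subseteq> (db - ob) \<union> r" for \<theta>
  proof (rule ccontr)
    assume "inst \<theta> ` set Fs \<inter> r \<noteq> {}"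
    then obtain F where F: "F \<in> set Fs" "inst \<theta> F \<in> r"
      by blast
    have \<theta>_db: "inst \<theta> ` q \<subseteq> db"
      using \<theta> \<open>r \<subseteq> ob\<close> ob_subset_db by blast
    then have "inst \<theta> ` set Fs \<subseteq> ob"
      using valuation_meets_ob F \<open>r \<subseteq> ob\<close> by blast
    then have "inst \<theta> ` set Fs \<subseteq> r"
      using \<theta> set_Fs_subset by blast
    then show False
      using pg \<theta>_db by (simp add: partial_garbage_def)
  qed
  ultimately show ?thesis
    using pg ob_subset_db unfolding garbage_set_def partial_garbage_def by blast
qed

lemma ob_garbage_set:
  assumes minimal: "\<forall>ob'. lemma19_conds S q db Fs ob' \<and> ob' \<subseteq> ob \<longrightarrow> ob' = ob"
  shows "garbage_set S q db (set Fs) ob"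
proof -
  let ?family = "{P. \<exists>r. partial_garbage P r}"
  have "?family \<subseteq> Pow db"
    using ob_subset_db by (auto simp: partial_garbage_def)
  then have "finite ?family"
    using finite_db by (meson finite_Pow_iff finite_subset)
  moreover have "?family \<noteq> {}"
    using partial_garbage_empty by blast
  ultimately obtain P where "P \<in> ?family" and P_max: "\<forall>P'\<in>?family. P \<subseteq> P' \<longrightarrow> P = P'"
    using finite_has_maximal by meson
  then obtain r where pg: "partial_garbage P r"
    by blast
  have "\<not> (\<exists>P' r'. partial_garbage P' r' \<and> P \<subset> P')"
    using P_max by blast
  then have "lemma19_conds S q db Fs P"
    by (rule maximal_partial_garbage_conds[OF pg])
  then have "P = ob"
    using minimal pg by (simp add: partial_garbage_def)
  then show ?thesis
    using partial_garbage_ob_garbage_set pg by blast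
qed

end

section \<open>Every garbage set is contained in ob\<close>

locale lemma19_other_garbage = lemma19_setting S q db Fs ob
  for S :: "'r schema" and q :: "('r, 'v, 'c) atom set" and db :: "('r, 'c) fact set"
    and Fs :: "('r, 'v, 'c) atom list" and ob :: "('r, 'c) fact set" +
  fixes ob' :: "('r, 'c) fact set" and r' :: "('r, 'c) fact set"
  assumes ob'_subset_db: "ob' \<subseteq> db"
    and ob'_facts: "\<forall>A\<in>ob'. atom_of q A \<in> set Fs \<and> block S db A \<subseteq> ob'"
    and repair: "is_repair S ob' r'"
    and garbage: "\<forall>\<theta>. inst \<theta> ` q \<subseteq> (db - ob') \<union> r' \<longrightarrow> inst \<theta> ` set Fs \<inter> r' = {}"
begin

definition extra :: "('r, 'c) fact set" where
  "extra = ob' - ob"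

definition leads_to_extra :: "('r, 'c) fact \<Rightarrow> nat \<Rightarrow> bool" where
  "leads_to_extra A m \<longleftrightarrow> (\<exists>\<theta> i. i < k \<and> inst \<theta> ` q \<subseteq> db \<and> A = inst \<theta> (Fs ! i) \<and>
     inst \<theta> (Fs ! ((i + m) mod k)) \<in> extra)"

definition dist_to_extra :: "('r, 'c) fact \<Rightarrow> nat" where
  "dist_to_extra A = (LEAST m. \<exists>B\<in>block S db A. leads_to_extra B m)"

definition candidates :: "('r, 'c) fact set" where
  "candidates = {A \<in> db - ob. \<exists>m. \<exists>B\<in>block S db A. leads_to_extra B m}"

text \<open>The predicate depends on A only through its block, so rep picks a single fact per block.\<close>

definition rep :: "('r, 'c) fact \<Rightarrow> ('r, 'c) fact" where
  "rep A = (SOME B. B \<in> block S db A \<and> leads_to_extra B (dist_to_extra A) \<and> (B \<in> ob' \<longrightarrow> B \<in> r'))"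

definition selected :: "('r, 'c) fact set" where
  "selected = rep ` candidates"

lemma extra_key_equal:
  assumes "A \<in> extra" and "key_equal S A B" and "B \<in> db"
  shows "B \<in> extra"
proof -
  have "B \<in> ob'"
    using assms ob'_facts by (auto simp: extra_def block_def)
  moreover have "B \<notin> ob"
    using assms key_equal_in_ob[of B A] ob'_subset_db key_equal_sym by (auto simp: extra_def)
  ultimately show ?thesis
    by (simp add: extra_def)
qed

lemma extra_leads_to_extra:
  assumes "A \<in> extra"
  shows "leads_to_extra A 0"
proof -
  have "A \<in> db" "A \<notin> ob" "atom_of q A \<in> set Fs"
    using assms ob'_subset_db ob'_facts by (auto simp: extra_def)
  then obtain B where "hookC S q db Fs A B"
    using outdeg_zero_in_ob by (auto simp: outdeg_zero_def)
  then obtain \<theta> i where "i < k" "inst \<theta> ` q \<subseteq> db" "A = inst \<theta> (Fs ! i)"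
    by (rule hookC_obtain_valuation)
  then show ?thesis
    using assms unfolding leads_to_extra_def by (intro exI[of _ \<theta>] exI[of _ i]) simp
qed

lemma extra_subset_candidates: "extra \<subseteq> candidates"
proof
  fix A assume "A \<in> extra"
  then have "A \<in> db - ob" "A \<in> block S db A" "leads_to_extra A 0"
    using ob'_subset_db extra_leads_to_extra by (auto simp: extra_def block_def)
  then show "A \<in> candidates"
    unfolding candidates_def by blast
qed

lemma dist_to_extra_key_equal: "key_equal S A B \<Longrightarrow> dist_to_extra A = dist_to_extra B"
  unfolding dist_to_extra_def by (drule block_key_equal[where db = db]) simp

lemma rep_key_equal: "key_equal S A B \<Longrightarrow> rep A = rep B"
  unfolding rep_def
  by (frule block_key_equal[where db = db], drule dist_to_extra_key_equal) simp

lemma dist_to_extra_extra: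
  assumes "A \<in> extra"
  shows "dist_to_extra A = 0"
proof -
  have "A \<in> block S db A"
    using assms ob'_subset_db by (auto simp: extra_def block_def)
  then show ?thesis
    using extra_leads_to_extra[OF assms] unfolding dist_to_extra_def
    by (intro Least_eq_0) blast
qed

lemma rep_exists:
  assumes "A \<in> candidates"
  shows "\<exists>B. B \<in> block S db A \<and> leads_to_extra B (dist_to_extra A) \<and> (B \<in> ob' \<longrightarrow> B \<in> r')"
proof (cases "A \<in> extra")
  case True
  then obtain B where B: "B \<in> r'" "key_equal S A B"
    using repair_covers[OF repair] by (auto simp: extra_def)
  then have "B \<in> db"
    using repair ob'_subset_db by (auto simp: is_repair_def)
  then have "B \<in> extra"
    using extra_key_equal True B(2) by blast
  then have "B \<in> block S db A" "leads_to_extra B (dist_to_extra A)"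
    using B(2) \<open>B \<in> db\<close> extra_leads_to_extra dist_to_extra_extra[OF True]
    by (simp_all add: block_def)
  then show ?thesis
    using B(1) by blast
next
  case False
  obtain B where B: "B \<in> block S db A" "leads_to_extra B (dist_to_extra A)"
    using assms LeastI_ex[of "\<lambda>m. \<exists>B\<in>block S db A. leads_to_extra B m"]
    unfolding candidates_def dist_to_extra_def by blast
  have "B \<notin> ob'"
  proof
    assume "B \<in> ob'"
    have "key_equal S B A" "A \<in> db"
      using B(1) assms key_equal_sym by (auto simp: block_def candidates_def)
    then have "A \<in> block S db B"
      by (simp add: block_def)
    then have "A \<in> ob'"
      using \<open>B \<in> ob'\<close> ob'_facts by blast
    then show False
      using False assms by (simp add: extra_def candidates_def)
  qed
  then show ?thesis
    using B by blast
qed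

lemma rep_spec:
  assumes "A \<in> candidates"
  shows "rep A \<in> block S db A" and "leads_to_extra (rep A) (dist_to_extra A)"
    and "rep A \<in> ob' \<Longrightarrow> rep A \<in> r'"
  using someI_ex[OF rep_exists[OF assms]] unfolding rep_def[symmetric] by blast+

lemma selected_spec:
  assumes "X \<in> selected"
  shows "X \<in> db - ob" and "leads_to_extra X (dist_to_extra X)" and "X \<in> ob' \<Longrightarrow> X \<in> r'"
proof -
  obtain A where A: "A \<in> candidates" "X = rep A"
    using assms by (auto simp: selected_def)
  then have "X \<in> block S db A"
    using rep_spec(1) by blast
  then have "X \<in> db" "key_equal S A X"
    by (simp_all add: block_def)
  moreover have "A \<in> db" "A \<notin> ob"
    using A(1) by (simp_all add: candidates_def)
  ultimately show "X \<in> db - ob"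
    using key_equal_in_ob[of X A] key_equal_sym[OF \<open>key_equal S A X\<close>] by blast
  show "leads_to_extra X (dist_to_extra X)"
    using rep_spec(2)[OF A(1)] dist_to_extra_key_equal[OF \<open>key_equal S A X\<close>]
    unfolding A(2) by simp
  show "X \<in> ob' \<Longrightarrow> X \<in> r'"
    using rep_spec(3)[OF A(1)] unfolding A(2) .
qed

lemma consistent_selected: "consistent S selected"
  unfolding consistent_def
proof (intro ballI impI)
  fix X Y assume "X \<in> selected" "Y \<in> selected" "key_equal S X Y"
  then obtain A B where "A \<in> candidates" "X = rep A" "B \<in> candidates" "Y = rep B"
    by (auto simp: selected_def)
  then have "key_equal S A X" "key_equal S B Y"
    using rep_spec(1) by (simp_all add: block_def)
  then have "key_equal S A B"
    using \<open>key_equal S X Y\<close> key_equal_sym key_equal_trans by metis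
  then show "X = Y"
    using \<open>X = rep A\<close> \<open>Y = rep B\<close> rep_key_equal by simp
qed

lemma leads_to_extra_0: "leads_to_extra A 0 \<Longrightarrow> A \<in> extra"
  by (auto simp: leads_to_extra_def)

lemma leads_to_extra_next:
  assumes \<theta>: "inst \<theta> ` q \<subseteq> db" and i: "i < k" and hit: "inst \<theta> (Fs ! ((i + d) mod k)) \<in> extra"
  shows "leads_to_extra (inst \<theta> (Fs ! (Suc i mod k))) ((d + k - 1) mod k)"
proof -
  have "(Suc i mod k + (d + k - 1) mod k) mod k = (Suc i + (d + k - 1)) mod k"
    by (simp add: mod_add_eq)
  also have "Suc i + (d + k - 1) = (i + d) + k"
    using length_Fs_pos by simp
  also have "((i + d) + k) mod k = (i + d) mod k"
    by simp
  finally show ?thesis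
    unfolding leads_to_extra_def using \<theta> hit length_Fs_pos
    by (intro exI[of _ \<theta>] exI[of _ "Suc i mod k"]) simp
qed

lemma selected_step:
  assumes "X \<in> selected"
  shows "\<exists>Y\<in>selected. hookC S q db Fs X Y \<and>
    (0 < dist_to_extra X \<longrightarrow> dist_to_extra Y < dist_to_extra X)"
proof -
  let ?d = "dist_to_extra X"
  obtain \<theta> i where i: "i < k" and \<theta>: "inst \<theta> ` q \<subseteq> db" and X: "X = inst \<theta> (Fs ! i)"
    and hit: "inst \<theta> (Fs ! ((i + ?d) mod k)) \<in> extra"
    using selected_spec(2)[OF assms] unfolding leads_to_extra_def by blast
  let ?Z = "inst \<theta> (Fs ! (Suc i mod k))"
  have hook: "hookC S q db Fs X ?Z"
    using hookC_inst[OF \<theta> i] X by simp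
  have Z: "?Z \<in> db - ob"
    using hookC_outside_ob[OF hook] hookC_db[OF hook] selected_spec(1)[OF assms] by blast
  then have Z_block: "?Z \<in> block S db ?Z"
    by (simp add: block_def)
  then have "?Z \<in> candidates" and dist_Z: "dist_to_extra ?Z \<le> (?d + k - 1) mod k"
    using Z leads_to_extra_next[OF \<theta> i hit] unfolding candidates_def dist_to_extra_def
    by (blast, blast intro: Least_le)
  have rep_Z: "key_equal S ?Z (rep ?Z)" "rep ?Z \<in> db"
    using rep_spec(1)[OF \<open>?Z \<in> candidates\<close>] by (simp_all add: block_def)
  have "rep ?Z \<in> selected"
    using \<open>?Z \<in> candidates\<close> by (simp add: selected_def)
  moreover have "hookC S q db Fs X (rep ?Z)"
    using hookC_key_equal_target[OF hook rep_Z] .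
  moreover have "dist_to_extra (rep ?Z) < ?d" if "0 < ?d"
  proof -
    have "(?d + k - 1) mod k = (?d - 1 + k) mod k"
      using that by simp
    then have "(?d + k - 1) mod k \<le> ?d - 1"
      by (metis mod_add_self2 mod_less_eq_dividend)
    then show ?thesis
      using dist_Z dist_to_extra_key_equal[OF rep_Z(1)] that by linarith
  qed
  ultimately show ?thesis
    by (intro bexI[of _ "rep ?Z"] conjI impI) simp_all
qed

lemma closed_selected_meets_extra:
  assumes "C \<subseteq> selected" and "C \<noteq> {}"
    and f: "\<forall>X\<in>C. f X \<in> C \<and> (0 < dist_to_extra X \<longrightarrow> dist_to_extra (f X) < dist_to_extra X)"
  shows "C \<inter> extra \<noteq> {}"
proof -
  obtain X where X: "X \<in> C" and X_min: "\<forall>Y\<in>C. dist_to_extra X \<le> dist_to_extra Y"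
    using ex_has_least_nat[of "\<lambda>X. X \<in> C" _ dist_to_extra] assms(2) by blast
  then have "dist_to_extra X = 0"
    using f by (meson leD neq0_conv)
  then have "leads_to_extra X 0"
    using selected_spec(2) X assms(1) by (metis subsetD)
  then show ?thesis
    using X leads_to_extra_0 by blast
qed

lemma selected_cycle:
  assumes "extra \<noteq> {}"
  obtains cs where "embedding S q db Fs 1 cs" and "relevant q db cs"
    and "set cs \<subseteq> selected" and "set cs \<inter> extra \<noteq> {}"
proof -
  have "\<forall>X\<in>selected. \<exists>Y. Y \<in> selected \<and> hookC S q db Fs X Y \<and>
      (0 < dist_to_extra X \<longrightarrow> dist_to_extra Y < dist_to_extra X)"
    using selected_step by blast
  then obtain f where f: "\<forall>X\<in>selected. f X \<in> selected \<and> hookC S q db Fs X (f X) \<and>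
      (0 < dist_to_extra X \<longrightarrow> dist_to_extra (f X) < dist_to_extra X)"
    by (rule bchoice[elim_format]) blast
  have "finite selected"
    using finite_db selected_spec(1) by (meson DiffD1 finite_subset subsetI)
  obtain A where "A \<in> extra"
    using assms by blast
  then have "rep A \<in> selected"
    using extra_subset_candidates by (auto simp: selected_def)
  then obtain cs where cs: "cs \<noteq> []" "distinct cs" "set cs \<subseteq> selected"
    and next_f: "\<And>j. j < length cs \<Longrightarrow> cs ! (Suc j mod length cs) = f (cs ! j)"
    using finite_self_map_has_cycle[OF \<open>finite selected\<close>, of f] f by blast
  have cycle: "hook_cycle cs"
    unfolding hook_cycle_def using cs(1,3) next_f f by (metis nth_mem subsetD)
  have "consistent S (set cs)"
    using consistent_selected cs(3) by (auto simp: consistent_def)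
  moreover have "set cs \<inter> ob = {}"
    using cs(3) selected_spec(1) by blast
  ultimately have emb: "embedding S q db Fs 1 cs" and "relevant q db cs"
    using hook_cycle_outside_ob cycle cs(2) by blast+
  have "f X \<in> set cs" if "X \<in> set cs" for X
    using that next_f cs(1) by (metis in_set_conv_nth length_greater_0_conv mod_less_divisor nth_mem)
  then have "set cs \<inter> extra \<noteq> {}"
    using closed_selected_meets_extra[of "set cs" f] cs(1,3) f by blast
  then show thesis
    using that emb \<open>relevant q db cs\<close> cs(3) by blast
qed

lemma garbage_subset_ob: "ob' \<subseteq> ob"
proof (rule ccontr)
  assume "\<not> ob' \<subseteq> ob"
  then have "extra \<noteq> {}"
    by (auto simp: extra_def)
  then obtain cs where emb: "embedding S q db Fs 1 cs" and "relevant q db cs"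
    and sel: "set cs \<subseteq> selected" and hits: "set cs \<inter> extra \<noteq> {}"
    by (rule selected_cycle)
  then obtain \<theta> where \<theta>: "inst \<theta> ` q \<subseteq> db" "set cs \<subseteq> inst \<theta> ` q"
    unfolding relevant_def by blast
  have facts: "set cs = inst \<theta> ` set Fs"
    using relevant_embedding_facts[OF emb \<theta>(2)] .
  have "inst \<theta> ` q \<subseteq> (db - ob') \<union> r'"
  proof
    fix Y assume "Y \<in> inst \<theta> ` q"
    then obtain G where G: "G \<in> q" "Y = inst \<theta> G"
      by blast
    show "Y \<in> (db - ob') \<union> r'"
    proof (cases "Y \<in> ob'")
      case True
      then have "G \<in> set Fs"
        using ob'_facts G by auto
      then have "Y \<in> selected"
        using facts sel G(2) by blast
      then show ?thesis
        using selected_spec(3) True by blast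
    qed (use \<theta>(1) G in blast)
  qed
  moreover obtain X where "X \<in> set cs" "X \<in> extra"
    using hits by blast
  then have "X \<in> r'"
    using sel selected_spec(3) by (auto simp: extra_def)
  then have "inst \<theta> ` set Fs \<inter> r' \<noteq> {}"
    using \<open>X \<in> set cs\<close> facts by blast
  ultimately show False
    using garbage by blast
qed

end

theorem lemma19:
  fixes S :: "'r schema"
    and q :: "('r, 'v, 'c) atom set"
    and db :: "('r, 'c) fact set"
    and Fs :: "('r, 'v, 'c) atom list"
    and ob :: "('r, 'c) fact set"
  assumes "sjf_query S q"
    and "mgraph_cycle S q Fs"
    and "is_db S q db"
    and "lemma19_conds S q db Fs ob"
    and "\<forall>ob'. lemma19_conds S q db Fs ob' \<and> ob' \<subseteq> ob \<longrightarrow> ob' = ob"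
  shows "max_garbage_set S q db (set Fs) ob"
proof -
  interpret lemma19_setting S q db Fs ob
    using assms(1-4) by unfold_locales
  have "garbage_set S q db (set Fs) ob"
    using ob_garbage_set assms(5) .
  moreover have "ob' \<subseteq> ob" if garbage: "garbage_set S q db (set Fs) ob'" for ob'
  proof -
    obtain r' where "ob' \<subseteq> db" "\<forall>A\<in>ob'. atom_of q A \<in> set Fs \<and> block S db A \<subseteq> ob'"
      "is_repair S ob' r'" "\<forall>\<theta>. inst \<theta> ` q \<subseteq> (db - ob') \<union> r' \<longrightarrow> inst \<theta> ` set Fs \<inter> r' = {}"
      using garbage unfolding garbage_set_def by blast
    then interpret lemma19_other_garbage S q db Fs ob ob' r'
      by unfold_locales
    show ?thesis
      by (rule garbage_subset_ob)
  qed
  ultimately show ?thesis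
    unfolding max_garbage_set_def by blast
qed

end
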